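(* Let $G$ be a 4-dimensional connected Lie group with a global basis $\{X_1,\dots,X_4\}$ of left invariant vector fields satisfying, for real constants $\lambda_1,\dots,\lambda_4$, $[X_1,X_2]=\lambda_1X_1+\lambda_2X_2$, $[X_1,X_3]=\lambda_3X_2-\lambda_1X_4$, $[X_1,X_4]=-\lambda_3X_1-\lambda_2X_4$, $[X_2,X_3]=\lambda_4X_2+\lambda_1X_3$, $[X_2,X_4]=-\lambda_4X_1+\lambda_2X_3$, $[X_3,X_4]=\lambda_3X_3+\lambda_4X_4$, and let $JX_1=X_3$, $JX_2=X_4$, $JX_3=-X_1$, $JX_4=-X_2$, $g(X_1,X_1)=g(X_2,X_2)=-g(X_3,X_3)=-g(X_4,X_4)=1$, $g(X_i,X_j)=0$ for $i\ne j$. Let $\nabla'$ be a natural connection on $(G,J,g)$ with totally skew-symmetric torsion tensor $T$. Then $\nabla'_{X_1}X_1=\nabla'_{X_3}X_3=-\lambda_1X_2-\lambda_3X_4$, $\nabla'_{X_2}X_2=\nabla'_{X_4}X_4=\lambda_2X_1+\lambda_4X_3$, $\nabla'_{X_1}X_2=\nabla'_{X_3}X_4=\lambda_1X_1+\lambda_3X_3$, $\nabla'_{X_1}X_3=-\nabla'_{X_3}X_1=\lambda_3X_2-\lambda_1X_4$, $\nabla'_{X_1}X_4=-\nabla'_{X_3}X_2=-\lambda_3X_1+\lambda_1X_3$, $\nabla'_{X_2}X_1=\nabla'_{X_4}X_3=-\lambda_2X_2-\lambda_4X_4$, $\nabla'_{X_2}X_3=-\nabla'_{X_4}X_1=\lambda_4X_2-\lambda_2X_4$,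 $\nabla'_{X_2}X_4=-\nabla'_{X_4}X_2=-\lambda_4X_1+\lambda_2X_3$, and the components $T_{ijk}=g(T(X_i,X_j),X_k)$ are all zero except those determined by total skew-symmetry from $T_{134}=\lambda_1$, $T_{234}=\lambda_2$, $T_{123}=-\lambda_3$, $T_{124}=-\lambda_4$.
   Context: A linear connection $\nabla'$ on an almost complex manifold with Norden metric $(M,J,g)$ ($J^2=-\mathrm{Id}$, $g(Jx,Jy)=-g(x,y)$) is natural if $\nabla'J=0$ and $\nabla'g=0$. Its torsion is $T(x,y)=\nabla'_xy-\nabla'_yx-[x,y]$, and $T(x,y,z)=g(T(x,y),z)$; the torsion is totally skew-symmetric if $T(x,y,z)$ is a 3-form, i.e. skew-symmetric in every pair of arguments. *)

theory Defs
  imports Complex_Main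
begin

text \<open>Indices of the global left-invariant frame X1,...,X4 of the Lie group G.
  A tangent vector at a point is recorded by its coefficients w.r.t. this frame.\<close>

datatype idx = I1 | I2 | I3 | I4

type_synonym vec = "idx \<Rightarrow> real"

definition mk4 :: "real \<Rightarrow> real \<Rightarrow> real \<Rightarrow> real \<Rightarrow> vec" where
  "mk4 a b c d = (\<lambda>k. case k of I1 \<Rightarrow> a | I2 \<Rightarrow> b | I3 \<Rightarrow> c | I4 \<Rightarrow> d)"

definition X :: "idx \<Rightarrow> vec" where
  "X i = (\<lambda>k. if k = i then 1 else 0)"

definition sum4 :: "(idx \<Rightarrow> real) \<Rightarrow> real" where
  "sum4 f = f I1 + f I2 + f I3 + f I4"

definition Jv :: "vec \<Rightarrow> vec" where
  "Jv v = mk4 (- v I3) (- v I4) (v I1) (v I2)"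

definition gm :: "vec \<Rightarrow> vec \<Rightarrow> real" where
  "gm v w = v I1 * w I1 + v I2 * w I2 - v I3 * w I3 - v I4 * w I4"

definition brk :: "real \<Rightarrow> real \<Rightarrow> real \<Rightarrow> real \<Rightarrow> idx \<Rightarrow> idx \<Rightarrow> vec" where
  "brk l1 l2 l3 l4 i j = (case (i, j) of
      (I1, I2) \<Rightarrow> mk4 l1 l2 0 0
    | (I2, I1) \<Rightarrow> mk4 (- l1) (- l2) 0 0
    | (I1, I3) \<Rightarrow> mk4 0 l3 0 (- l1)
    | (I3, I1) \<Rightarrow> mk4 0 (- l3) 0 l1
    | (I1, I4) \<Rightarrow> mk4 (- l3) 0 0 (- l2)
    | (I4, I1) \<Rightarrow> mk4 l3 0 0 l2
    | (I2, I3) \<Rightarrow> mk4 0 l4 l1 0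
    | (I3, I2) \<Rightarrow> mk4 0 (- l4) (- l1) 0
    | (I2, I4) \<Rightarrow> mk4 (- l4) 0 l2 0
    | (I4, I2) \<Rightarrow> mk4 l4 0 (- l2) 0
    | (I3, I4) \<Rightarrow> mk4 0 0 l3 l4
    | (I4, I3) \<Rightarrow> mk4 0 0 (- l3) (- l4)
    | _ \<Rightarrow> mk4 0 0 0 0)"

text \<open>Bilinear extension of a frame-indexed bilinear operation to coefficient vectors
  (constant-coefficient combinations of the left-invariant frame).\<close>
definition bilin :: "(idx \<Rightarrow> idx \<Rightarrow> vec) \<Rightarrow> vec \<Rightarrow> vec \<Rightarrow> vec" where
  "bilin F a b = (\<lambda>k. sum4 (\<lambda>i. sum4 (\<lambda>j. a i * b j * F i j k)))"

text \<open>A linear connection is given (at each point p of G) by its values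
  nab p i j = coefficients of (\<nabla>'_{X_i} X_j)(p).\<close>
definition nabv :: "('p \<Rightarrow> idx \<Rightarrow> idx \<Rightarrow> vec) \<Rightarrow> 'p \<Rightarrow> vec \<Rightarrow> vec \<Rightarrow> vec" where
  "nabv nab p a b = bilin (nab p) a b"

definition torsion :: "real \<Rightarrow> real \<Rightarrow> real \<Rightarrow> real \<Rightarrow> ('p \<Rightarrow> idx \<Rightarrow> idx \<Rightarrow> vec)
    \<Rightarrow> 'p \<Rightarrow> vec \<Rightarrow> vec \<Rightarrow> vec" where
  "torsion l1 l2 l3 l4 nab p a b =
     (\<lambda>k. nabv nab p a b k - nabv nab p b a k - bilin (brk l1 l2 l3 l4) a b k)"

definition torsion3 :: "real \<Rightarrow> real \<Rightarrow> real \<Rightarrow> real \<Rightarrow> ('p \<Rightarrow> idx \<Rightarrow> idx \<Rightarrow> vec)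
    \<Rightarrow> 'p \<Rightarrow> vec \<Rightarrow> vec \<Rightarrow> vec \<Rightarrow> real" where
  "torsion3 l1 l2 l3 l4 nab p a b c = gm (torsion l1 l2 l3 l4 nab p a b) c"

text \<open>Natural connection: \<nabla>'J = 0 and \<nabla>'g = 0 (tested on constant-coefficient
  fields, which suffices since both are tensors and J, g have constant components).\<close>
definition natural_conn :: "('p \<Rightarrow> idx \<Rightarrow> idx \<Rightarrow> vec) \<Rightarrow> bool" where
  "natural_conn nab \<longleftrightarrow>
     (\<forall>p a b. nabv nab p a (Jv b) = Jv (nabv nab p a b)) \<and>
     (\<forall>p a b c. gm (nabv nab p a b) c + gm b (nabv nab p a c) = 0)"

definition totally_skew_torsion :: "real \<Rightarrow> real \<Rightarrow> real \<Rightarrow> real \<Rightarrow> ('p \<Rightarrow> idx \<Rightarrow> idx \<Rightarrow> vec) \<Rightarrow> bool" where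
  "totally_skew_torsion l1 l2 l3 l4 nab \<longleftrightarrow>
     (\<forall>p a b c. torsion3 l1 l2 l3 l4 nab p a b c = - torsion3 l1 l2 l3 l4 nab p b a c \<and>
                torsion3 l1 l2 l3 l4 nab p a b c = - torsion3 l1 l2 l3 l4 nab p a c b)"

end

theory Submission
  imports Defs
begin

text \<open>For a metric connection with totally skew-symmetric torsion, the Christoffel symbols
  G(i,j,k) = g(\<nabla>'_{X_i} X_j, X_k) obey the Koszul-type formula
  2 G(i,j,k) = C(i,j,k) - C(j,k,i) + C(k,i,j) + T(i,j,k) with C(i,j,k) = g([X_i,X_j],X_k),
  so the connection is determined by the four essential torsion components.
  Compatibility with J and the Norden metric forces g(\<nabla>'_x y, J y) = 0, and four instances
  of this, e.g. G(2,1,3) = 0, fix those components.\<close>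

lemma skew_torsion_connection_formula:
  fixes A C T :: "'v \<Rightarrow> 'v \<Rightarrow> 'v \<Rightarrow> real"
  assumes A_skew: "\<And>a b c. A a b c = - A a c b"
    and torsion: "\<And>a b c. T a b c = A a b c - A b a c - C a b c"
    and T_skew12: "\<And>a b c. T a b c = - T b a c"
    and T_skew23: "\<And>a b c. T a b c = - T a c b"
  shows "2 * A a b c = C a b c - C b c a + C c a b + T a b c"
proof -
  have "T b c a = T a b c" "T c a b = T a b c"
    using T_skew23[of b c a] T_skew12[of b a c] T_skew12[of c a b] T_skew23[of a b c]
    by linarith+
  then show ?thesis
    using torsion[of a b c] torsion[of b c a] torsion[of c a b]
      A_skew[of b c a] A_skew[of c a b] A_skew[of a c b] by linarith
qed

lemma skew3_repeated_zero:
  fixes T :: "'v \<Rightarrow> 'v \<Rightarrow> 'v \<Rightarrow> real"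
  assumes T_skew12: "\<And>a b c. T a b c = - T b a c"
    and T_skew23: "\<And>a b c. T a b c = - T a c b"
    and "a = b \<or> b = c \<or> a = c"
  shows "T a b c = 0"
  using assms(3)
proof (elim disjE)
  assume "a = c"
  then show ?thesis using T_skew12[of a b a] T_skew23[of b a a] by simp
qed (use T_skew12[of a a c] T_skew23[of a b b] in simp_all)

lemma gm_commute: "gm v w = gm w v"
  by (simp add: gm_def mult.commute)

lemma gm_Jv_left: "gm (Jv v) w = gm v (Jv w)"
  by (simp add: gm_def Jv_def mk4_def)

lemma natural_conn_metric:
  assumes "natural_conn nab"
  shows "gm (nabv nab p a b) c = - gm (nabv nab p a c) b"
  using assms gm_commute unfolding natural_conn_def by (metis add_eq_0_iff)

lemma natural_conn_orthogonal_J: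
  assumes nat: "natural_conn nab"
  shows "gm (nabv nab p a b) (Jv b) = 0"
proof -
  have "gm (nabv nab p a b) (Jv b) = gm (Jv (nabv nab p a b)) b"
    by (simp add: gm_Jv_left)
  also have "\<dots> = gm (nabv nab p a (Jv b)) b"
    using nat unfolding natural_conn_def by simp
  also have "\<dots> = - gm (nabv nab p a b) (Jv b)"
    by (rule natural_conn_metric[OF nat])
  finally show ?thesis by simp
qed

lemma torsion3_eq:
  "torsion3 l1 l2 l3 l4 nab p a b c =
     gm (nabv nab p a b) c - gm (nabv nab p b a) c - gm (bilin (brk l1 l2 l3 l4) a b) c"
  by (simp add: torsion3_def torsion_def gm_def algebra_simps)

lemma natural_skew_torsion_koszul:
  assumes nat: "natural_conn nab" and skew: "totally_skew_torsion l1 l2 l3 l4 nab"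
  shows "2 * gm (nabv nab p a b) c =
      gm (bilin (brk l1 l2 l3 l4) a b) c - gm (bilin (brk l1 l2 l3 l4) b c) a
    + gm (bilin (brk l1 l2 l3 l4) c a) b + torsion3 l1 l2 l3 l4 nab p a b c"
proof (rule skew_torsion_connection_formula[where A = "\<lambda>a b c. gm (nabv nab p a b) c"])
  show "torsion3 l1 l2 l3 l4 nab p a b c = gm (nabv nab p a b) c - gm (nabv nab p b a) c
      - gm (bilin (brk l1 l2 l3 l4) a b) c" for a b c
    by (rule torsion3_eq)
qed (use skew natural_conn_metric[OF nat] in \<open>unfold totally_skew_torsion_def, blast+\<close>)

lemma nabv_frame: "nabv nab p (X i) (X j) = nab p i j"
  by (cases i; cases j) (simp_all add: nabv_def bilin_def sum4_def X_def)

lemma bilin_frame: "bilin F (X i) (X j) = F i j"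
  by (cases i; cases j) (simp_all add: bilin_def sum4_def X_def)

lemma component_by_gm: "v k = gm (X k) (X k) * gm v (X k)"
  by (cases k) (simp_all add: gm_def X_def)

lemma gm_X: "gm v (X I1) = v I1" "gm v (X I2) = v I2" "gm v (X I3) = - v I3" "gm v (X I4) = - v I4"
  by (simp_all add: gm_def X_def)

lemma X_apply: "X i k = (if k = i then 1 else 0)"
  by (simp add: X_def)

lemma Jv_X: "Jv (X I1) = X I3" "Jv (X I2) = X I4"
  by (simp_all add: Jv_def X_def mk4_def fun_eq_iff split: idx.split)

lemma vec_eq_mk4_iff: "v = mk4 a b c d \<longleftrightarrow> v I1 = a \<and> v I2 = b \<and> v I3 = c \<and> v I4 = d"
  by (auto simp: mk4_def fun_eq_iff split: idx.split)

lemma frame_koszul: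
  assumes "natural_conn nab" and "totally_skew_torsion l1 l2 l3 l4 nab"
  shows "2 * gm (nab p i j) (X k) =
      gm (brk l1 l2 l3 l4 i j) (X k) - gm (brk l1 l2 l3 l4 j k) (X i)
    + gm (brk l1 l2 l3 l4 k i) (X j) + torsion3 l1 l2 l3 l4 nab p (X i) (X j) (X k)"
  using natural_skew_torsion_koszul[OF assms, of p "X i" "X j" "X k"]
  by (simp add: nabv_frame bilin_frame)

lemma frame_connection_component:
  assumes "natural_conn nab" and "totally_skew_torsion l1 l2 l3 l4 nab"
  shows "nab p i j k = gm (X k) (X k) / 2 *
     (gm (brk l1 l2 l3 l4 i j) (X k) - gm (brk l1 l2 l3 l4 j k) (X i)
    + gm (brk l1 l2 l3 l4 k i) (X j) + torsion3 l1 l2 l3 l4 nab p (X i) (X j) (X k))"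
  using component_by_gm[of "nab p i j" k] frame_koszul[OF assms, of p i j k] by simp

lemma frame_orthogonal_J:
  assumes "natural_conn nab"
  shows "gm (nab p i I1) (X I3) = 0" "gm (nab p i I2) (X I4) = 0"
  using natural_conn_orthogonal_J[OF assms, of p "X i" "X I1"]
    natural_conn_orthogonal_J[OF assms, of p "X i" "X I2"]
  by (simp_all add: Jv_X nabv_frame)

lemma frame_torsion_swap:
  assumes "totally_skew_torsion l1 l2 l3 l4 nab"
  shows "torsion3 l1 l2 l3 l4 nab p (X j) (X i) (X k) = - torsion3 l1 l2 l3 l4 nab p (X i) (X j) (X k)"
    and "torsion3 l1 l2 l3 l4 nab p (X i) (X k) (X j) = - torsion3 l1 l2 l3 l4 nab p (X i) (X j) (X k)"
  using assms unfolding totally_skew_torsion_def by metis+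

lemma frame_torsion_repeated:
  assumes "totally_skew_torsion l1 l2 l3 l4 nab" and "i = j \<or> j = k \<or> i = k"
  shows "torsion3 l1 l2 l3 l4 nab p (X i) (X j) (X k) = 0"
  using skew3_repeated_zero[where T = "\<lambda>i j k. torsion3 l1 l2 l3 l4 nab p (X i) (X j) (X k)"]
    frame_torsion_swap[OF assms(1)] assms(2) by blast

lemma frame_torsion_values:
  assumes nat: "natural_conn nab" and skew: "totally_skew_torsion l1 l2 l3 l4 nab"
  shows "torsion3 l1 l2 l3 l4 nab p (X I1) (X I3) (X I4) = l1"
    and "torsion3 l1 l2 l3 l4 nab p (X I2) (X I3) (X I4) = l2"
    and "torsion3 l1 l2 l3 l4 nab p (X I1) (X I2) (X I3) = - l3"
    and "torsion3 l1 l2 l3 l4 nab p (X I1) (X I2) (X I4) = - l4"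
proof -
  note koszul = frame_koszul[OF nat skew, of p]
  note orth = frame_orthogonal_J[OF nat, of p]
  note swap = frame_torsion_swap[OF skew, of p]
  note brk_eval = brk_def mk4_def gm_X
  show "torsion3 l1 l2 l3 l4 nab p (X I1) (X I3) (X I4) = l1"
    using koszul[of I4 I1 I3] orth(1)[of I4] swap(1)[of I4 I1 I3] swap(2)[of I1 I4 I3]
    by (simp add: brk_eval)
  show "torsion3 l1 l2 l3 l4 nab p (X I2) (X I3) (X I4) = l2"
    using koszul[of I3 I2 I4] orth(2)[of I3] swap(1)[of I3 I2 I4] by (simp add: brk_eval)
  show "torsion3 l1 l2 l3 l4 nab p (X I1) (X I2) (X I3) = - l3"
    using koszul[of I2 I1 I3] orth(1)[of I2] swap(1)[of I2 I1 I3] by (simp add: brk_eval)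
  show "torsion3 l1 l2 l3 l4 nab p (X I1) (X I2) (X I4) = - l4"
    using koszul[of I1 I2 I4] orth(2)[of I1] by (simp add: brk_eval)
qed

theorem proposition3p5:
  fixes l1 l2 l3 l4 :: real and nab :: "'p \<Rightarrow> idx \<Rightarrow> idx \<Rightarrow> vec"
  assumes "natural_conn nab"
    and "totally_skew_torsion l1 l2 l3 l4 nab"
  shows "\<forall>p.
      nab p I1 I1 = mk4 0 (- l1) 0 (- l3) \<and> nab p I3 I3 = mk4 0 (- l1) 0 (- l3) \<and>
      nab p I2 I2 = mk4 l2 0 l4 0 \<and> nab p I4 I4 = mk4 l2 0 l4 0 \<and>
      nab p I1 I2 = mk4 l1 0 l3 0 \<and> nab p I3 I4 = mk4 l1 0 l3 0 \<and>
      nab p I1 I3 = mk4 0 l3 0 (- l1) \<and> nab p I3 I1 = mk4 0 (- l3) 0 l1 \<and>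
      nab p I1 I4 = mk4 (- l3) 0 l1 0 \<and> nab p I3 I2 = mk4 l3 0 (- l1) 0 \<and>
      nab p I2 I1 = mk4 0 (- l2) 0 (- l4) \<and> nab p I4 I3 = mk4 0 (- l2) 0 (- l4) \<and>
      nab p I2 I3 = mk4 0 l4 0 (- l2) \<and> nab p I4 I1 = mk4 0 (- l4) 0 l2 \<and>
      nab p I2 I4 = mk4 (- l4) 0 l2 0 \<and> nab p I4 I2 = mk4 l4 0 (- l2) 0 \<and>
      torsion3 l1 l2 l3 l4 nab p (X I1) (X I3) (X I4) = l1 \<and>
      torsion3 l1 l2 l3 l4 nab p (X I2) (X I3) (X I4) = l2 \<and>
      torsion3 l1 l2 l3 l4 nab p (X I1) (X I2) (X I3) = - l3 \<and>
      torsion3 l1 l2 l3 l4 nab p (X I1) (X I2) (X I4) = - l4 \<and>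
      (\<forall>i j k. (i = j \<or> j = k \<or> i = k) \<longrightarrow> torsion3 l1 l2 l3 l4 nab p (X i) (X j) (X k) = 0)"
proof -
  note swap12 = frame_torsion_swap(1)[OF assms(2)]
  note swap23 = frame_torsion_swap(2)[OF assms(2)]
  \<comment> \<open>oriented instances of skew-symmetry that sort the frame indices of T increasingly\<close>
  note sort = swap12[where i = I1 and j = I2] swap12[where i = I1 and j = I3]
    swap12[where i = I1 and j = I4] swap12[where i = I2 and j = I3]
    swap12[where i = I2 and j = I4] swap12[where i = I3 and j = I4]
    swap23[where j = I1 and k = I2] swap23[where j = I1 and k = I3]
    swap23[where j = I1 and k = I4] swap23[where j = I2 and k = I3]
    swap23[where j = I2 and k = I4] swap23[where j = I3 and k = I4]
  show ?thesis
    unfolding vec_eq_mk4_iff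
    by (simp add: frame_connection_component[OF assms] frame_torsion_values[OF assms]
        frame_torsion_repeated[OF assms(2)] sort brk_def mk4_def gm_X X_apply)
qed

end
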